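(* For every message $M$ and formula $\phi$: $\vdash\mathsf{k}_{\mathsf{CM}}(M)\to([M]\phi\leftrightarrow\phi)$.
   Context: Fix a finite set $\mathcal{A}$ of agent names containing a distinguished name $\mathsf{CM}$. Messages: $M ::= a \mid B \mid (M,M)$ ($a\in\mathcal{A}$, $B$ optional data constants, pairs). $\mathcal{P}$ is a denumerable set of propositional variables containing atoms $\mathsf{k}_a(M)$ ("$a$ knows $M$"). Formulas: $\phi ::= P \mid \phi\wedge\phi \mid \phi\vee\phi \mid \neg\phi \mid \phi\to\phi \mid [M]\phi$. Abbreviations: $\mathrm{true}:=\mathsf{k}_{\mathsf{CM}}(\mathsf{CM})$, $\mathrm{false}:=\neg\mathrm{true}$, $\phi\leftrightarrow\psi:=(\phi\to\psi)\wedge(\psi\to\phi)$, $\langle M\rangle\phi:=\neg\neg(\mathsf{k}_{\mathsf{CM}}(M)\wedge\phi)$. LIiP is the smallest set of formulas containing all instances of: the axioms of an adequate Hilbert axiomatization of intuitionistic propositional logic; $\mathsf{k}_a(a)$; $(\mathsf{k}_a(M)\wedge\mathsf{k}_a(M'))\leftrightarrow\mathsf{k}_a((M,M'))$; $[M]\mathsf{k}_{\mathsf{CM}}(M)$; $[M](\phi\to\psi)\to([M]\phi\to[M]\psi)$; $[M]\phi\to(\mathsf{k}_{\mathsf{CM}}(M)\to\phi)$; $[M]\phi\to\langle M\rangle\phi$; $\phi\to[M]\phi$; and closed under modus ponens and the rule: if $\mathsf{k}_{\mathsf{CM}}(M)\to\mathsf{k}_{\mathsf{CM}}(M')$ is in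 the set then so is $[M']\phi\to[M]\phi$ for every $\phi$. Write $\vdash\phi$ for $\phi\in\mathrm{LIiP}$. *)

theory Defs
  imports Main
begin

datatype ('a, 'b) msg = Ag 'a | Dat 'b | MPair "('a, 'b) msg" "('a, 'b) msg"

datatype ('a, 'b, 'p) pvar = Kn 'a "('a, 'b) msg" | PV 'p

datatype ('a, 'b, 'p) form =
    Atom "('a, 'b, 'p) pvar"
  | Conj "('a, 'b, 'p) form" "('a, 'b, 'p) form"
  | Disj "('a, 'b, 'p) form" "('a, 'b, 'p) form"
  | Neg "('a, 'b, 'p) form"
  | Imp "('a, 'b, 'p) form" "('a, 'b, 'p) form"
  | Box "('a, 'b) msg" "('a, 'b, 'p) form"

abbreviation K :: "'a \<Rightarrow> ('a, 'b) msg \<Rightarrow> ('a, 'b, 'p) form" where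
  "K a M \<equiv> Atom (Kn a M)"

definition Iff :: "('a, 'b, 'p) form \<Rightarrow> ('a, 'b, 'p) form \<Rightarrow> ('a, 'b, 'p) form" where
  "Iff \<phi> \<psi> = Conj (Imp \<phi> \<psi>) (Imp \<psi> \<phi>)"

definition Dia :: "'a \<Rightarrow> ('a, 'b) msg \<Rightarrow> ('a, 'b, 'p) form \<Rightarrow> ('a, 'b, 'p) form" where
  "Dia cm M \<phi> = Neg (Neg (Conj (K cm M) \<phi>))"

text \<open>The logic LIiP, with distinguished agent name cm (the finite agent set is the
  finite type 'a).  Intuitionistic propositional logic: Kleene's Hilbert system.\<close>
inductive LIiP :: "'a::finite \<Rightarrow> ('a, 'b, 'p) form \<Rightarrow> bool" for cm :: "'a::finite" where
  ax1: "LIiP cm (Imp \<phi> (Imp \<psi> \<phi>))"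
| ax2: "LIiP cm (Imp (Imp \<phi> \<psi>) (Imp (Imp \<phi> (Imp \<psi> \<chi>)) (Imp \<phi> \<chi>)))"
| ax3: "LIiP cm (Imp \<phi> (Imp \<psi> (Conj \<phi> \<psi>)))"
| ax4: "LIiP cm (Imp (Conj \<phi> \<psi>) \<phi>)"
| ax5: "LIiP cm (Imp (Conj \<phi> \<psi>) \<psi>)"
| ax6: "LIiP cm (Imp \<phi> (Disj \<phi> \<psi>))"
| ax7: "LIiP cm (Imp \<psi> (Disj \<phi> \<psi>))"
| ax8: "LIiP cm (Imp (Imp \<phi> \<chi>) (Imp (Imp \<psi> \<chi>) (Imp (Disj \<phi> \<psi>) \<chi>)))"
| ax9: "LIiP cm (Imp (Imp \<phi> \<psi>) (Imp (Imp \<phi> (Neg \<psi>)) (Neg \<phi>)))"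
| ax10: "LIiP cm (Imp (Neg \<phi>) (Imp \<phi> \<psi>))"
| k_self: "LIiP cm (K a (Ag a))"
| k_pair: "LIiP cm (Iff (Conj (K a M) (K a M')) (K a (MPair M M')))"
| box_k: "LIiP cm (Box M (K cm M))"
| box_K: "LIiP cm (Imp (Box M (Imp \<phi> \<psi>)) (Imp (Box M \<phi>) (Box M \<psi>)))"
| box_T: "LIiP cm (Imp (Box M \<phi>) (Imp (K cm M) \<phi>))"
| box_dia: "LIiP cm (Imp (Box M \<phi>) (Dia cm M \<phi>))"
| mono: "LIiP cm (Imp \<phi> (Box M \<phi>))"
| mp: "LIiP cm (Imp \<phi> \<psi>) \<Longrightarrow> LIiP cm \<phi> \<Longrightarrow> LIiP cm \<psi>"
| kmono: "LIiP cm (Imp (K cm M) (K cm M')) \<Longrightarrow> LIiP cm (Imp (Box M' \<phi>) (Box M \<phi>))"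

end

theory Submission
  imports Defs
begin

text \<open>Both directions are already axioms up to propositional bookkeeping:
  \<open>[M]\<phi> \<rightarrow> (k_CM(M) \<rightarrow> \<phi>)\<close> gives one after exchanging hypotheses, and
  \<open>\<phi> \<rightarrow> [M]\<phi>\<close> gives the other after weakening by \<open>k_CM(M)\<close>.\<close>

lemma LIiP_imp_weaken: "LIiP cm \<psi> \<Longrightarrow> LIiP cm (Imp \<chi> \<psi>)"
  by (rule mp[OF ax1])

lemma LIiP_imp_mp:
  "LIiP cm (Imp \<chi> \<phi>) \<Longrightarrow> LIiP cm (Imp \<chi> (Imp \<phi> \<psi>)) \<Longrightarrow> LIiP cm (Imp \<chi> \<psi>)"
  by (rule mp[OF mp[OF ax2]])

lemma LIiP_imp_swap:
  assumes "LIiP cm (Imp \<psi> (Imp \<phi> \<chi>))"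
  shows "LIiP cm (Imp \<phi> (Imp \<psi> \<chi>))"
proof -
  have "LIiP cm (Imp \<phi> (Imp (Imp \<psi> \<phi>) (Imp (Imp \<psi> (Imp \<phi> \<chi>)) (Imp \<psi> \<chi>))))"
    by (rule LIiP_imp_weaken, rule ax2)
  then have "LIiP cm (Imp \<phi> (Imp (Imp \<psi> (Imp \<phi> \<chi>)) (Imp \<psi> \<chi>)))"
    by (rule LIiP_imp_mp[OF ax1])
  then show ?thesis
    by (rule LIiP_imp_mp[OF LIiP_imp_weaken[OF assms]])
qed

lemma LIiP_imp_conjI:
  assumes "LIiP cm (Imp \<chi> \<phi>)" and "LIiP cm (Imp \<chi> \<psi>)"
  shows "LIiP cm (Imp \<chi> (Conj \<phi> \<psi>))"
proof -
  have "LIiP cm (Imp \<chi> (Imp \<phi> (Imp \<psi> (Conj \<phi> \<psi>))))"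
    by (rule LIiP_imp_weaken, rule ax3)
  then have "LIiP cm (Imp \<chi> (Imp \<psi> (Conj \<phi> \<psi>)))"
    by (rule LIiP_imp_mp[OF assms(1)])
  then show ?thesis
    by (rule LIiP_imp_mp[OF assms(2)])
qed

theorem theorem2p10:
  fixes cm :: "'a::finite" and M :: "('a, 'b) msg" and \<phi> :: "('a, 'b, 'p) form"
  shows "LIiP cm (Imp (K cm M) (Iff (Box M \<phi>) \<phi>))"
proof -
  have "LIiP cm (Imp (K cm M) (Imp (Box M \<phi>) \<phi>))"
    by (rule LIiP_imp_swap[OF box_T])
  moreover have "LIiP cm (Imp (K cm M) (Imp \<phi> (Box M \<phi>)))"
    by (rule LIiP_imp_weaken[OF mono])
  ultimately show ?thesis
    unfolding Iff_def by (rule LIiP_imp_conjI)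
qed

end
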